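(* Let $\{w^k\}$, $w^k=(x_1^k,\dots,x_m^k,y^k)$, be generated by the L-GADMM iteration. Then for every $k\ge1$, $$(x_m^k-x_m^{k+1})^\top A_m^\top(y^k-y^{k+1})\ \ge\ \tfrac12\|x_m^k-x_m^{k+1}\|_{P_m}^2-\tfrac12\|x_m^{k-1}-x_m^k\|_{P_m}^2.$$
   Context: Standing setting. Let $m\ge 2$, $\ell$, $n_1,\dots,n_m$ be positive integers. For $i=1,\dots,m$ let $\theta_i:\mathbb{R}^{n_i}\to\mathbb{R}$ be convex, $\mathcal{X}_i\subseteq\mathbb{R}^{n_i}$ nonempty closed convex, $A_i\in\mathbb{R}^{\ell\times n_i}$ of full column rank, and $b\in\mathbb{R}^\ell$. Problem (P): $\min\{\sum_{i=1}^m\theta_i(x_i):\sum_{i=1}^mA_ix_i=b,\ x_i\in\mathcal{X}_i\}$, assumed to have a nonempty solution set. Write $u=(x_1,\dots,x_m)$, $w=(x_1,\dots,x_m,y)$ with $y\in\mathbb{R}^\ell$, $\theta(u)=\sum_i\theta_i(x_i)$, $F(w)=(-A_1^\top y,\dots,-A_m^\top y,\ \sum_iA_ix_i-b)$, $\mathcal{W}=\mathcal{X}_1\times\cdots\times\mathcal{X}_m\times\mathbb{R}^\ell$, and $\mathcal{W}^*=\{w^*\in\mathcal{W}:\theta(u)-\theta(u^* )+(w-w^* )^\top F(w^* )\ge0\ \forall w\in\mathcal{W}\}$ (nonempty). For symmetric $G$, $\|v\|_G^2:=v^\top Gv$; $\|\cdot\|$ is the Euclidean norm. Vectors are partitioned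 as $w=(R,x_m,y)$ with $R=(x_1,\dots,x_{m-1})$. Parameters: $\rho>0$, $\gamma\in(0,2)$, symmetric positive definite $P_i\in\mathbb{R}^{n_i\times n_i}$ ($i=1,\dots,m$) such that $G_1\succ0$, where $G_1$ is the symmetric block matrix with diagonal blocks $P_1,\dots,P_{m-1}$ and $(i,j)$ block $-\rho A_i^\top A_j$ for $i\ne j$, $1\le i,j\le m-1$. Matrices (w.r.t. the partition $(R,x_m,y)$): $Q=\begin{pmatrix}G_1&0&0\\0&\rho A_m^\top A_m+P_m&(1-\gamma)A_m^\top\\0&-A_m&\frac1\rho I_\ell\end{pmatrix}$, $M=\begin{pmatrix}I&0&0\\0&I_{n_m}&0\\0&-\rho A_m&\gamma I_\ell\end{pmatrix}$, $H=\begin{pmatrix}G_1&0&0\\0&P_m+\frac\rho\gamma A_m^\top A_m&\frac{1-\gamma}\gamma A_m^\top\\0&\frac{1-\gamma}\gamma A_m&\frac1{\gamma\rho}I_\ell\end{pmatrix}$, $N=Q^\top+Q-M^\top HM$. L-GADMM iteration: from an arbitrary $w^0=(x_1^0,\dots,x_m^0,y^0)\in\mathcal{W}$, for $k=0,1,2,\dots$: $x_j^{k+1}=\arg\min_{x_j\in\mathcal{X}_j}\{\theta_j(x_j)+\frac\rho2\|A_jx_j+\sum_{i=1,i\ne j}^mA_ix_i^k-b-\frac{y^k}\rho\|^2+\frac12\|x_j-x_j^k\|_{P_j}^2\}$ for $j=1,\dots,m-1$; $x_m^{k+1}=\arg\min_{x_m\in\mathcal{X}_m}\{\theta_m(x_m)+\frac\rho2\|\gamma\sum_{i=1}^{m-1}A_ix_i^{k+1}+(1-\gamma)(b-A_mx_m^k)+A_mx_m-b-\frac{y^k}\rho\|^2+\frac12\|x_m-x_m^k\|_{P_m}^2\}$;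 $y^{k+1}=y^k-\rho\big(\gamma\sum_{i=1}^{m-1}A_ix_i^{k+1}+(1-\gamma)(b-A_mx_m^k)+A_mx_m^{k+1}-b\big)$. Auxiliary sequence: $\bar w^k=(\bar x_1^k,\dots,\bar x_m^k,\bar y^k)$ with $\bar x_i^k=x_i^{k+1}$ ($i=1,\dots,m$) and $\bar y^k=y^k-\rho(\sum_{i=1}^{m-1}A_ix_i^{k+1}+A_mx_m^k-b)$; $\bar u^k=(\bar x_1^k,\dots,\bar x_m^k)$, $R^k=(x_1^k,\dots,x_{m-1}^k)$, $\bar R^k=(\bar x_1^k,\dots,\bar x_{m-1}^k)$. *)

theory Defs
  imports Complex_Main
begin

text \<open>Vectors of R^n are represented as functions nat => real that vanish
  outside the index range {0..<n}; an l x n matrix is a function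
  nat => nat => real, entry (r,c) for r < l, c < n.\<close>

definition rvec :: "nat \<Rightarrow> (nat \<Rightarrow> real) set" where
  "rvec n = {v. \<forall>j\<ge>n. v j = 0}"

definition vsub :: "(nat \<Rightarrow> real) \<Rightarrow> (nat \<Rightarrow> real) \<Rightarrow> (nat \<Rightarrow> real)" where
  "vsub u v = (\<lambda>j. u j - v j)"

definition dotp :: "nat \<Rightarrow> (nat \<Rightarrow> real) \<Rightarrow> (nat \<Rightarrow> real) \<Rightarrow> real" where
  "dotp n u v = (\<Sum>j<n. u j * v j)"

definition nsq :: "nat \<Rightarrow> (nat \<Rightarrow> real) \<Rightarrow> real" where
  "nsq n v = dotp n v v"

definition mv :: "(nat \<Rightarrow> nat \<Rightarrow> real) \<Rightarrow> nat \<Rightarrow> (nat \<Rightarrow> real) \<Rightarrow> (nat \<Rightarrow> real)" where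
  "mv A n x = (\<lambda>r. \<Sum>c<n. A r c * x c)"

definition mtv :: "(nat \<Rightarrow> nat \<Rightarrow> real) \<Rightarrow> nat \<Rightarrow> (nat \<Rightarrow> real) \<Rightarrow> (nat \<Rightarrow> real)" where
  "mtv A l y = (\<lambda>c. \<Sum>r<l. A r c * y r)"

definition qf :: "nat \<Rightarrow> (nat \<Rightarrow> nat \<Rightarrow> real) \<Rightarrow> (nat \<Rightarrow> real) \<Rightarrow> real" where
  "qf n G v = dotp n v (mv G n v)"

definition convex_fun :: "nat \<Rightarrow> ((nat \<Rightarrow> real) \<Rightarrow> real) \<Rightarrow> bool" where
  "convex_fun n f \<longleftrightarrow> (\<forall>x\<in>rvec n. \<forall>y\<in>rvec n. \<forall>t::real. 0 \<le> t \<and> t \<le> 1 \<longrightarrow>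
      f (\<lambda>j. t * x j + (1 - t) * y j) \<le> t * f x + (1 - t) * f y)"

definition convex_vset :: "nat \<Rightarrow> (nat \<Rightarrow> real) set \<Rightarrow> bool" where
  "convex_vset n S \<longleftrightarrow> S \<subseteq> rvec n \<and> (\<forall>x\<in>S. \<forall>y\<in>S. \<forall>t::real. 0 \<le> t \<and> t \<le> 1 \<longrightarrow>
      (\<lambda>j. t * x j + (1 - t) * y j) \<in> S)"

definition closed_vset :: "nat \<Rightarrow> (nat \<Rightarrow> real) set \<Rightarrow> bool" where
  "closed_vset n S \<longleftrightarrow> S \<subseteq> rvec n \<and> (\<forall>s z. (\<forall>k. s k \<in> S) \<and> z \<in> rvec n \<and>
      (\<forall>j<n. (\<lambda>k. s k j) \<longlonglongrightarrow> z j) \<longrightarrow> z \<in> S)"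

definition full_col_rank :: "nat \<Rightarrow> nat \<Rightarrow> (nat \<Rightarrow> nat \<Rightarrow> real) \<Rightarrow> bool" where
  "full_col_rank l n A \<longleftrightarrow> (\<forall>x\<in>rvec n. (\<forall>r<l. mv A n x r = 0) \<longrightarrow> x = (\<lambda>_. 0))"

definition sym_mat :: "nat \<Rightarrow> (nat \<Rightarrow> nat \<Rightarrow> real) \<Rightarrow> bool" where
  "sym_mat n P \<longleftrightarrow> (\<forall>i<n. \<forall>j<n. P i j = P j i)"

definition pos_def :: "nat \<Rightarrow> (nat \<Rightarrow> nat \<Rightarrow> real) \<Rightarrow> bool" where
  "pos_def n P \<longleftrightarrow> sym_mat n P \<and> (\<forall>x\<in>rvec n. x \<noteq> (\<lambda>_. 0) \<longrightarrow> qf n P x > 0)"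

text \<open>G_1 positive definite: the quadratic form of the symmetric block matrix with
  diagonal blocks P_1..P_(m-1) and off-diagonal blocks -rho A_i^T A_j is positive
  on every nonzero R = (x_1,...,x_(m-1)).\<close>
definition G1_pos_def :: "nat \<Rightarrow> nat \<Rightarrow> (nat \<Rightarrow> nat) \<Rightarrow> (nat \<Rightarrow> nat \<Rightarrow> nat \<Rightarrow> real)
    \<Rightarrow> (nat \<Rightarrow> nat \<Rightarrow> nat \<Rightarrow> real) \<Rightarrow> real \<Rightarrow> bool" where
  "G1_pos_def m l n A P \<rho> \<longleftrightarrow>
    (\<forall>R::nat \<Rightarrow> nat \<Rightarrow> real. (\<forall>i\<in>{1..m-1}. R i \<in> rvec (n i)) \<and> (\<exists>i\<in>{1..m-1}. R i \<noteq> (\<lambda>_. 0)) \<longrightarrow>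
      (\<Sum>i\<in>{1..m-1}. qf (n i) (P i) (R i))
      - \<rho> * (\<Sum>i\<in>{1..m-1}. \<Sum>j\<in>{1..m-1}-{i}. dotp l (mv (A i) (n i) (R i)) (mv (A j) (n j) (R j))) > 0)"

end

theory Submission
  imports Defs
begin

text \<open>The x_m-update is a proximal step: x_m^(j+1) minimises
  theta_m z + rho/2 |A_m z + c_j|^2 + 1/2 |z - x_m^j|_P^2 over X_m (c_j collects the
  terms not involving z), and the multiplier
  update gives rho (A_m x_m^(j+1) + c_j) = -y^(j+1). Convexity turns minimality into the
  variational inequality
  theta_m z - theta_m x_m^(j+1) - (A_m (z - x_m^(j+1)))^T y^(j+1)
    + (z - x_m^(j+1))^T P_m (x_m^(j+1) - x_m^j) >= 0   for all z in X_m.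
  Adding its instances for j = k-1 at z = x_m^(k+1) and for j = k at z = x_m^k cancels theta_m
  and leaves d^T A_m^T (y^k - y^(k+1)) >= |d|_P^2 - d^T P_m e with d = x_m^k - x_m^(k+1),
  e = x_m^(k-1) - x_m^k; finally d^T P_m e <= (|d|_P^2 + |e|_P^2)/2.\<close>

lemma mv_add_scaled: "mv A n (\<lambda>j. u j + t * v j) = (\<lambda>r. mv A n u r + t * mv A n v r)"
  unfolding mv_def by (auto simp: algebra_simps sum.distrib sum_distrib_left)

lemma mv_uminus: "mv A n (\<lambda>j. - u j) = (\<lambda>r. - mv A n u r)"
  unfolding mv_def by (simp add: sum_negf)

lemma dotp_commute: "dotp n u v = dotp n v u"
  unfolding dotp_def by (simp add: mult.commute)

lemma dotp_uminus_left: "dotp n (\<lambda>j. - u j) v = - dotp n u v"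
  unfolding dotp_def by (simp add: sum_negf)

lemma dotp_uminus_right: "dotp n u (\<lambda>j. - v j) = - dotp n u v"
  unfolding dotp_def by (simp add: sum_negf)

lemma dotp_vsub_right: "dotp n u (vsub v w) = dotp n u v - dotp n u w"
  unfolding dotp_def vsub_def by (simp add: algebra_simps sum_subtractf)

lemma dotp_add_scaled:
  "dotp n (\<lambda>j. u j + t * v j) (\<lambda>j. u' j + t * v' j)
     = dotp n u u' + t * (dotp n u v' + dotp n v u') + t\<^sup>2 * dotp n v v'"
  unfolding dotp_def by (simp add: algebra_simps sum.distrib sum_distrib_left power2_eq_square)

lemma dotp_mv_eq_dotp_mtv: "dotp l (mv A n u) v = dotp n u (mtv A l v)"
  unfolding dotp_def mv_def mtv_def
  by (simp add: sum_distrib_left sum_distrib_right mult_ac sum.swap[of _ "{..<l}"])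

lemma vsub_swap: "vsub v u = (\<lambda>j. - vsub u v j)"
  unfolding vsub_def by simp

lemma sym_mat_dotp_mv_commute:
  assumes "sym_mat n P"
  shows "dotp n u (mv P n v) = dotp n v (mv P n u)"
proof -
  have "dotp n u (mv P n v) = (\<Sum>i<n. \<Sum>j<n. P j i * u i * v j)"
    unfolding dotp_def mv_def using assms
    by (auto simp: sym_mat_def sum_distrib_left mult_ac intro!: sum.cong)
  also have "\<dots> = dotp n v (mv P n u)"
    unfolding dotp_def mv_def by (subst sum.swap) (simp add: sum_distrib_left mult_ac)
  finally show ?thesis .
qed

lemma nsq_add_scaled:
  "nsq l (\<lambda>r. u r + t * v r) = nsq l u + 2 * t * dotp l u v + t\<^sup>2 * nsq l v"
  unfolding nsq_def dotp_add_scaled using dotp_commute[of l v u] by simp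

lemma qf_add_scaled:
  assumes "sym_mat n P"
  shows "qf n P (\<lambda>j. u j + t * v j) = qf n P u + 2 * t * dotp n v (mv P n u) + t\<^sup>2 * qf n P v"
  unfolding qf_def mv_add_scaled dotp_add_scaled
  using sym_mat_dotp_mv_commute[OF assms, of u v] by simp

lemma qf_nonneg:
  assumes "pos_def n P" "v \<in> rvec n"
  shows "0 \<le> qf n P v"
  using assms by (cases "v = (\<lambda>_. 0)") (auto simp: pos_def_def qf_def dotp_def)

lemma dotp_mv_le_qf_mean:
  assumes P: "pos_def n P" and "u \<in> rvec n" "v \<in> rvec n"
  shows "dotp n u (mv P n v) \<le> (qf n P u + qf n P v) / 2"
proof -
  have sym: "sym_mat n P" using P by (simp add: pos_def_def)
  have "(\<lambda>j. u j + (-1) * v j) \<in> rvec n" using assms(2,3) by (simp add: rvec_def)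
  then have "0 \<le> qf n P (\<lambda>j. u j + (-1) * v j)" by (rule qf_nonneg[OF P])
  then show ?thesis
    unfolding qf_add_scaled[OF sym] sym_mat_dotp_mv_commute[OF sym, of v u] by simp
qed

lemma nonneg_if_nonneg_perturbed:
  fixes a c :: real
  assumes "\<And>t. 0 < t \<Longrightarrow> t \<le> 1 \<Longrightarrow> 0 \<le> a + t * c"
  shows "0 \<le> a"
proof (rule tendsto_lowerbound)
  show "((\<lambda>t. a + t * c) \<longlongrightarrow> a) (at_right 0)"
    by (auto intro!: tendsto_eq_intros)
  show "eventually (\<lambda>t. 0 \<le> a + t * c) (at_right 0)"
    unfolding eventually_at_right_field using assms by (auto intro!: exI[of _ 1])
qed simp

definition prox_objective ::
    "nat \<Rightarrow> ((nat \<Rightarrow> real) \<Rightarrow> real) \<Rightarrow> nat \<Rightarrow> (nat \<Rightarrow> nat \<Rightarrow> real) \<Rightarrow> real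
      \<Rightarrow> (nat \<Rightarrow> real) \<Rightarrow> (nat \<Rightarrow> nat \<Rightarrow> real) \<Rightarrow> (nat \<Rightarrow> real) \<Rightarrow> (nat \<Rightarrow> real) \<Rightarrow> real" where
  "prox_objective n f l A \<rho> c P x0 z =
     f z + \<rho> / 2 * nsq l (\<lambda>r. mv A n z r + c r) + 1 / 2 * qf n P (vsub z x0)"

lemma prox_minimizer_variational_inequality:
  assumes f: "convex_fun n f" and S: "convex_vset n S" and P: "sym_mat n P"
    and x1: "x1 \<in> S" and z: "z \<in> S"
    and min: "\<forall>z\<in>S. prox_objective n f l A \<rho> c P x0 x1 \<le> prox_objective n f l A \<rho> c P x0 z"
  shows "0 \<le> f z - f x1 + \<rho> * dotp l (mv A n (vsub z x1)) (\<lambda>r. mv A n x1 r + c r)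
                + dotp n (vsub z x1) (mv P n (vsub x1 x0))"
proof -
  define w where "w = vsub z x1"
  define a where "a = (\<lambda>r. mv A n x1 r + c r)"
  define v where "v = vsub x1 x0"
  define D where "D = \<rho> * dotp l (mv A n w) a + dotp n w (mv P n v)"
  define C where "C = \<rho> / 2 * nsq l (mv A n w) + 1 / 2 * qf n P w"
  have "0 \<le> (f z - f x1 + D) + t * C" if t: "0 < t" "t \<le> 1" for t
  proof -
    define zt where "zt = (\<lambda>j. x1 j + t * w j)"
    have "zt = (\<lambda>j. t * z j + (1 - t) * x1 j)"
      unfolding zt_def w_def vsub_def by (auto simp: algebra_simps)
    moreover have "z \<in> rvec n" "x1 \<in> rvec n"
      using S x1 z unfolding convex_vset_def by auto
    ultimately have zt_S: "zt \<in> S" and f_zt: "f zt \<le> t * f z + (1 - t) * f x1"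
      using S f x1 z t unfolding convex_vset_def convex_fun_def by auto
    have zt_res: "(\<lambda>r. mv A n zt r + c r) = (\<lambda>r. a r + t * mv A n w r)"
      unfolding zt_def mv_add_scaled a_def by (auto simp: algebra_simps)
    have zt_dist: "vsub zt x0 = (\<lambda>j. v j + t * w j)"
      unfolding zt_def v_def vsub_def by (auto simp: algebra_simps)
    have "f x1 + \<rho> / 2 * nsq l a + 1 / 2 * qf n P v \<le> prox_objective n f l A \<rho> c P x0 zt"
      using min zt_S unfolding prox_objective_def a_def v_def by blast
    also have "\<dots> = f zt + \<rho> / 2 * nsq l a + 1 / 2 * qf n P v + t * D + t\<^sup>2 * C"
      unfolding prox_objective_def zt_res zt_dist nsq_add_scaled qf_add_scaled[OF P] D_def C_def
      using dotp_commute[of l a "mv A n w"] by (simp add: algebra_simps)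
    finally have "0 \<le> t * ((f z - f x1 + D) + t * C)"
      using f_zt by (simp add: algebra_simps power2_eq_square)
    then show ?thesis using t by (simp add: zero_le_mult_iff)
  qed
  then have "0 \<le> f z - f x1 + D" by (rule nonneg_if_nonneg_perturbed)
  then show ?thesis unfolding D_def w_def a_def v_def by simp
qed

lemma dotp_dual_update:
  assumes "\<forall>r<l. \<rho> * (mv A n x1 r + c r) = - y1 r"
  shows "\<rho> * dotp l u (\<lambda>r. mv A n x1 r + c r) = - dotp l u y1"
  using assms unfolding dotp_def
  by (simp add: sum_distrib_left sum_negf mult.left_commute[of \<rho>])

lemma consecutive_prox_steps_inequality:
  assumes f: "convex_fun n f" and S: "convex_vset n S" and P: "pos_def n P"
    and x0: "x0 \<in> S" and x1: "x1 \<in> S" and x2: "x2 \<in> S"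
    and min1: "\<forall>z\<in>S. prox_objective n f l A \<rho> c1 P x0 x1 \<le> prox_objective n f l A \<rho> c1 P x0 z"
    and min2: "\<forall>z\<in>S. prox_objective n f l A \<rho> c2 P x1 x2 \<le> prox_objective n f l A \<rho> c2 P x1 z"
    and y1: "\<forall>r<l. \<rho> * (mv A n x1 r + c1 r) = - y1 r"
    and y2: "\<forall>r<l. \<rho> * (mv A n x2 r + c2 r) = - y2 r"
  shows "1 / 2 * qf n P (vsub x1 x2) - 1 / 2 * qf n P (vsub x0 x1)
           \<le> dotp n (vsub x1 x2) (mtv A l (vsub y1 y2))"
proof -
  have sym: "sym_mat n P" using P by (simp add: pos_def_def)
  define d where "d = vsub x1 x2"
  define e where "e = vsub x0 x1"
  have vi1: "0 \<le> f x2 - f x1 + dotp l (mv A n d) y1 + dotp n d (mv P n e)"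
    using prox_minimizer_variational_inequality[OF f S sym x1 x2 min1]
    unfolding dotp_dual_update[OF y1] vsub_swap[of x2] vsub_swap[of x1 x0] d_def e_def
    by (simp add: mv_uminus dotp_uminus_left dotp_uminus_right)
  have vi2: "0 \<le> f x1 - f x2 - dotp l (mv A n d) y2 - qf n P d"
    using prox_minimizer_variational_inequality[OF f S sym x2 x1 min2]
    unfolding dotp_dual_update[OF y2] vsub_swap[of x2] d_def qf_def
    by (simp add: mv_uminus dotp_uminus_right)
  have "x0 \<in> rvec n" "x1 \<in> rvec n" "x2 \<in> rvec n"
    using S x0 x1 x2 unfolding convex_vset_def by auto
  then have "d \<in> rvec n" "e \<in> rvec n"
    unfolding d_def e_def vsub_def rvec_def by auto
  then have "dotp n d (mv P n e) \<le> (qf n P d + qf n P e) / 2"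
    by (rule dotp_mv_le_qf_mean[OF P])
  with vi1 vi2 show ?thesis
    unfolding d_def[symmetric] e_def[symmetric] dotp_mv_eq_dotp_mtv[symmetric] dotp_vsub_right
    by simp
qed

theorem lemma4p4:
  fixes m l :: nat and n :: "nat \<Rightarrow> nat"
    and \<theta> :: "nat \<Rightarrow> (nat \<Rightarrow> real) \<Rightarrow> real"
    and X :: "nat \<Rightarrow> (nat \<Rightarrow> real) set"
    and A P :: "nat \<Rightarrow> nat \<Rightarrow> nat \<Rightarrow> real"
    and b :: "nat \<Rightarrow> real"
    and \<rho> \<gamma> :: real
    and x :: "nat \<Rightarrow> nat \<Rightarrow> nat \<Rightarrow> real"
    and y :: "nat \<Rightarrow> nat \<Rightarrow> real"
    and k :: nat
  assumes m: "m \<ge> 2" and l: "l \<ge> 1" and npos: "\<forall>i\<in>{1..m}. n i \<ge> 1"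
    and conv: "\<forall>i\<in>{1..m}. convex_fun (n i) (\<theta> i)"
    and Xne: "\<forall>i\<in>{1..m}. X i \<noteq> {}"
    and Xcvx: "\<forall>i\<in>{1..m}. convex_vset (n i) (X i)"
    and Xcl: "\<forall>i\<in>{1..m}. closed_vset (n i) (X i)"
    and rank: "\<forall>i\<in>{1..m}. full_col_rank l (n i) (A i)"
    and b: "b \<in> rvec l"
    and solvable: "\<exists>xs. (\<forall>i\<in>{1..m}. xs i \<in> X i) \<and>
        (\<forall>r<l. (\<Sum>i\<in>{1..m}. mv (A i) (n i) (xs i) r) = b r) \<and>
        (\<forall>u. (\<forall>i\<in>{1..m}. u i \<in> X i) \<and> (\<forall>r<l. (\<Sum>i\<in>{1..m}. mv (A i) (n i) (u i) r) = b r)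
             \<longrightarrow> (\<Sum>i\<in>{1..m}. \<theta> i (xs i)) \<le> (\<Sum>i\<in>{1..m}. \<theta> i (u i)))"
    and Wstar: "\<exists>xs ys. (\<forall>i\<in>{1..m}. xs i \<in> X i) \<and> ys \<in> rvec l \<and>
        (\<forall>u v. (\<forall>i\<in>{1..m}. u i \<in> X i) \<and> v \<in> rvec l \<longrightarrow>
           (\<Sum>i\<in>{1..m}. \<theta> i (u i)) - (\<Sum>i\<in>{1..m}. \<theta> i (xs i))
           + (\<Sum>i\<in>{1..m}. dotp (n i) (vsub (u i) (xs i)) (\<lambda>c. - mtv (A i) l ys c))
           + dotp l (vsub v ys) (\<lambda>r. (\<Sum>i\<in>{1..m}. mv (A i) (n i) (xs i) r) - b r) \<ge> 0)"
    and rho: "\<rho> > 0" and gam: "0 < \<gamma>" "\<gamma> < 2"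
    and Ppd: "\<forall>i\<in>{1..m}. pos_def (n i) (P i)"
    and G1: "G1_pos_def m l n A P \<rho>"
    and init: "\<forall>i\<in>{1..m}. x 0 i \<in> X i" "y 0 \<in> rvec l"
    and xstep: "\<forall>j. \<forall>j'\<in>{1..m-1}. x (Suc j) j' \<in> X j' \<and>
        (\<forall>z\<in>X j'.
          \<theta> j' (x (Suc j) j')
            + \<rho> / 2 * nsq l (\<lambda>r. mv (A j') (n j') (x (Suc j) j') r
                 + (\<Sum>i\<in>{1..m}-{j'}. mv (A i) (n i) (x j i) r) - b r - y j r / \<rho>)
            + 1 / 2 * qf (n j') (P j') (vsub (x (Suc j) j') (x j j'))
          \<le> \<theta> j' z
            + \<rho> / 2 * nsq l (\<lambda>r. mv (A j') (n j') z r
                 + (\<Sum>i\<in>{1..m}-{j'}. mv (A i) (n i) (x j i) r) - b r - y j r / \<rho>)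
            + 1 / 2 * qf (n j') (P j') (vsub z (x j j')))"
    and xmstep: "\<forall>j. x (Suc j) m \<in> X m \<and>
        (\<forall>z\<in>X m.
          \<theta> m (x (Suc j) m)
            + \<rho> / 2 * nsq l (\<lambda>r. \<gamma> * (\<Sum>i\<in>{1..m-1}. mv (A i) (n i) (x (Suc j) i) r)
                 + (1 - \<gamma>) * (b r - mv (A m) (n m) (x j m) r)
                 + mv (A m) (n m) (x (Suc j) m) r - b r - y j r / \<rho>)
            + 1 / 2 * qf (n m) (P m) (vsub (x (Suc j) m) (x j m))
          \<le> \<theta> m z
            + \<rho> / 2 * nsq l (\<lambda>r. \<gamma> * (\<Sum>i\<in>{1..m-1}. mv (A i) (n i) (x (Suc j) i) r)
                 + (1 - \<gamma>) * (b r - mv (A m) (n m) (x j m) r)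
                 + mv (A m) (n m) z r - b r - y j r / \<rho>)
            + 1 / 2 * qf (n m) (P m) (vsub z (x j m)))"
    and ystep: "\<forall>j. y (Suc j) \<in> rvec l \<and>
        (\<forall>r<l. y (Suc j) r = y j r - \<rho> * (\<gamma> * (\<Sum>i\<in>{1..m-1}. mv (A i) (n i) (x (Suc j) i) r)
                 + (1 - \<gamma>) * (b r - mv (A m) (n m) (x j m) r)
                 + mv (A m) (n m) (x (Suc j) m) r - b r))"
    and k: "k \<ge> 1"
  shows "dotp (n m) (vsub (x k m) (x (Suc k) m)) (mtv (A m) l (vsub (y k) (y (Suc k))))
     \<ge> 1 / 2 * qf (n m) (P m) (vsub (x k m) (x (Suc k) m))
       - 1 / 2 * qf (n m) (P m) (vsub (x (k - 1) m) (x k m))"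
proof -
  have mI: "m \<in> {1..m}" using m by auto
  define c where "c = (\<lambda>j r. \<gamma> * (\<Sum>i\<in>{1..m-1}. mv (A i) (n i) (x (Suc j) i) r)
      + (1 - \<gamma>) * (b r - mv (A m) (n m) (x j m) r) - b r - y j r / \<rho>)"
  have step: "\<forall>z\<in>X m. prox_objective (n m) (\<theta> m) l (A m) \<rho> (c j) (P m) (x j m) (x (Suc j) m)
                \<le> prox_objective (n m) (\<theta> m) l (A m) \<rho> (c j) (P m) (x j m) z" for j
    using xmstep unfolding prox_objective_def c_def by (simp add: algebra_simps)
  have dual: "\<forall>r<l. \<rho> * (mv (A m) (n m) (x (Suc j) m) r + c j r) = - y (Suc j) r" for j
    using ystep rho unfolding c_def by (simp add: algebra_simps)
  have iterate_in_X: "x j m \<in> X m" for j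
    using init(1) xmstep mI by (cases j) auto
  obtain j where j: "k = Suc j" using k by (cases k) auto
  show ?thesis
    using consecutive_prox_steps_inequality[OF _ _ _ iterate_in_X iterate_in_X iterate_in_X
        step step dual dual] conv Xcvx Ppd mI
    unfolding j by simp
qed

end
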